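(* Let $A\in\mathbb{R}^{n\times n}$, $C\in\mathbb{R}^{m\times n}$, and consider the system $x^+=Ax$, $y=Cx$ on $\mathcal{X}=\mathbb{R}^n$, $\mathcal{Y}=\mathbb{R}^m$. Let $S_0:=\mathcal{N}(C)$ and $S_k:=AS_{k-1}\cap S_0$ for $k\ge1$. Then for every $k\in\{0,1,2,\ldots\}$ and every $x\in\mathbb{R}^n$, $$[x]_k=\begin{cases} x+S_k & \text{if } x\in\mathcal{R}(A^k),\\ \emptyset & \text{if } x\notin\mathcal{R}(A^k),\end{cases}$$ where $\mathcal{R}(A^k)$ is the range of $A^k$.
   Context: For a system $x^+=f(x)$, $y=h(x)$ with $f:\mathcal{X}\to\mathcal{X}$, $h:\mathcal{X}\to\mathcal{Y}$, inverse images are taken in the set-valued sense: $f^{-1}(x):=\{\eta\in\mathcal{X}: f(\eta)=x\}$ (possibly empty), $h^{-1}(y):=\{\eta: h(\eta)=y\}$, and images of sets are $f(S)=\{f(s):s\in S\}$; for a set $S$ of points, $[S]_k:=\bigcup_{s\in S}[s]_k$. Define $[x]_0:=h^{-1}(h(x))$, and for $k\ge0$: $[x]_k^+:=f([f^{-1}(x)]_k)$ and $[x]_{k+1}:=[x]_k^+\cap[x]_0$. Here $f(x)=Ax$, $h(x)=Cx$. *)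

theory Defs
  imports "HOL-Analysis.Analysis"
begin

text \<open>Equivalence classes [x]_k for a system x+ = f x, y = h x (set-valued inverse images).\<close>
fun eqcls :: "('x \<Rightarrow> 'x) \<Rightarrow> ('x \<Rightarrow> 'y) \<Rightarrow> nat \<Rightarrow> 'x \<Rightarrow> 'x set" where
  "eqcls f h 0 x = {\<eta>. h \<eta> = h x}"
| "eqcls f h (Suc k) x =
     (f ` (\<Union>\<eta> \<in> {\<eta>. f \<eta> = x}. eqcls f h k \<eta>)) \<inter> eqcls f h 0 x"

fun matpow :: "('a::comm_ring_1)^'n^'n \<Rightarrow> nat \<Rightarrow> 'a^'n^'n" where
  "matpow A 0 = mat 1"
| "matpow A (Suc k) = A ** matpow A k"

fun Sseq :: "real^'n^'n \<Rightarrow> real^'n^'m \<Rightarrow> nat \<Rightarrow> (real^'n) set" where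
  "Sseq A C 0 = {x. C *v x = 0}"
| "Sseq A C (Suc k) = ((\<lambda>x. A *v x) ` Sseq A C k) \<inter> Sseq A C 0"

end

theory Submission
  imports Defs
begin

(* Only additivity of the dynamics f and of the output map h matters, so the argument is
   carried out for additive maps on arbitrary abelian groups.  The unobservable sets
   S_0 = ker h, S_(k+1) = f S_k \<inter> ker h are introduced as unobs_seq.
   - [x]_0 = {\<eta>. h \<eta> = h x} is the translate x + ker h (eqcls_0_translate).
   - One step of the recursion: if every class [e]_k is e + S for e in a set R and empty
     outside R, then [x]_(k+1) is x + (f S \<inter> ker h) for x \<in> f R and empty otherwise
     (eqcls_Suc_translate); this uses that f maps translates to translates.
   - Induction on k gives [x]_k = x + S_k for x \<in> range (f^^k), and {} otherwise
     (eqcls_additive). *)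

fun unobs_seq :: "('a \<Rightarrow> 'a) \<Rightarrow> ('a \<Rightarrow> 'b::zero) \<Rightarrow> nat \<Rightarrow> 'a set" where
  "unobs_seq f h 0 = {s. h s = 0}"
| "unobs_seq f h (Suc k) = f ` unobs_seq f h k \<inter> unobs_seq f h 0"

lemma level_set_translate:
  assumes "Modules.additive h"
  shows "{\<eta>. h \<eta> = h x} = (\<lambda>s. x + s) ` {s. h s = 0}"
proof (intro set_eqI iffI)
  fix \<eta> assume "\<eta> \<in> {\<eta>. h \<eta> = h x}"
  then have "h (\<eta> - x) = 0" by (simp add: Modules.additive.diff[OF assms])
  then show "\<eta> \<in> (\<lambda>s. x + s) ` {s. h s = 0}" by (intro image_eqI[of _ _ "\<eta> - x"]) auto
qed (auto simp: Modules.additive.add[OF assms])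

lemma eqcls_0_translate:
  assumes "Modules.additive h"
  shows "eqcls f h 0 x = (\<lambda>s. x + s) ` unobs_seq f h 0"
  using level_set_translate[OF assms] by simp

lemma additive_image_translate:
  assumes "Modules.additive f"
  shows "f ` ((\<lambda>s. e + s) ` S) = (\<lambda>s. f e + s) ` (f ` S)"
  by (auto simp: image_image Modules.additive.add[OF assms])

lemma eqcls_Suc_translate:
  assumes f: "Modules.additive f" and h: "Modules.additive h"
    and classes: "\<And>e. eqcls f h k e = (if e \<in> R then (\<lambda>s. e + s) ` S else {})"
  shows "eqcls f h (Suc k) x =
           (if x \<in> f ` R then (\<lambda>s. x + s) ` (f ` S \<inter> {s. h s = 0}) else {})"
proof -
  have image_union: "f ` (\<Union>e \<in> {e. f e = x}. eqcls f h k e) =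
                       (if x \<in> f ` R then (\<lambda>s. x + s) ` (f ` S) else {})"
  proof -
    have "f ` (\<Union>e \<in> {e. f e = x}. eqcls f h k e) =
            (\<Union>e \<in> {e. f e = x} \<inter> R. f ` ((\<lambda>s. e + s) ` S))"
      by (auto simp: classes)
    also have "\<dots> = (\<Union>e \<in> {e. f e = x} \<inter> R. (\<lambda>s. x + s) ` (f ` S))"
      by (simp add: additive_image_translate[OF f])
    also have "\<dots> = (if x \<in> f ` R then (\<lambda>s. x + s) ` (f ` S) else {})"
      by auto
    finally show ?thesis .
  qed
  have "inj (\<lambda>s. x + s)" by (simp add: inj_on_def)
  then show ?thesis
    by (simp add: image_union level_set_translate[OF h] image_Int)
qed

theorem eqcls_additive:
  assumes f: "Modules.additive f" and h: "Modules.additive h"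
  shows "eqcls f h k x =
           (if x \<in> range (f ^^ k) then (\<lambda>s. x + s) ` unobs_seq f h k else {})"
proof (induction k arbitrary: x)
  case 0
  show ?case using eqcls_0_translate[OF h, of f x] by simp
next
  case (Suc k)
  have "range (f ^^ Suc k) = f ` range (f ^^ k)" by (simp add: image_comp)
  then show ?case
    using eqcls_Suc_translate[OF f h Suc.IH] by simp
qed

lemma additive_matrix_vector_mult: "Modules.additive (\<lambda>v. M *v v)"
  by (rule Modules.additive.intro) (simp add: matrix_vector_right_distrib)

lemma matpow_mult_vec: "matpow A k *v v = ((\<lambda>v. A *v v) ^^ k) v"
  by (induction k arbitrary: v) (simp_all add: matrix_vector_mul_assoc[symmetric])

lemma Sseq_unobs_seq: "Sseq A C k = unobs_seq (\<lambda>v. A *v v) (\<lambda>v. C *v v) k"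
  by (induction k) simp_all

theorem mainTheorem2:
  fixes A :: "real^'n^'n" and C :: "real^'n^'m" and k :: nat and x :: "real^'n"
  shows "eqcls (\<lambda>v. A *v v) (\<lambda>v. C *v v) k x =
           (if x \<in> range (\<lambda>v. matpow A k *v v)
            then (\<lambda>s. x + s) ` Sseq A C k
            else {})"
proof -
  have "(\<lambda>v. matpow A k *v v) = (\<lambda>v. A *v v) ^^ k"
    by (rule ext) (rule matpow_mult_vec)
  then show ?thesis
    using eqcls_additive[OF additive_matrix_vector_mult[of A] additive_matrix_vector_mult[of C]]
    by (simp add: Sseq_unobs_seq)
qed

end
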